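(* Let $J$ be a cone with joins and $A,\tilde A\subset J\times J$ be such that $v\le w$ for every $(v,w)\in A$, and $v+\tilde v\le w+\tilde w$ for every $(v,w)\in A$ and $(\tilde v,\tilde w)\in\tilde A$. Then $x:=\inf_{(v,w)\in A}(w-v)$ satisfies $v+x\le w$ and $\tilde v\le\tilde w+x$ for all $(v,w)\in A$, $(\tilde v,\tilde w)\in\tilde A$.
   Context: A prewedge is a set $W$ with a commutative associative addition with neutral element $0$ and a multiplication $[0,\infty)\times W\to W$ such that $\lambda(\eta v)=(\lambda\eta)v$, $0v=0$, $1v=v$, $(\lambda+\eta)v=\lambda v+\eta v$, $\lambda(v+w)=\lambda v+\lambda w$; it carries the preorder $v\le w$ iff $v+z=w$ for some $z$. A wedge is a prewedge in which $\le$ is antisymmetric and $v=\sup_{\eta<1}\eta v$ for every $v$. A cone is a wedge in which every directed subset has a supremum. A cone with joins is a cone $J$ in which every subset $A$ has an infimum and $\inf(v+A)=v+\inf A$ for all $v\in J$, $A\subset J$. For $v\le w$ in a cone with joins, $w-v:=\max\{z\in J: v+z=w\}$ (this maximum exists). The infimum of the empty family is the maximum $\infty$ of $J$. *)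

theory Defs
  imports Complex_Main
begin

definition prewedge :: "('a \<Rightarrow> 'a \<Rightarrow> 'a) \<Rightarrow> 'a \<Rightarrow> (real \<Rightarrow> 'a \<Rightarrow> 'a) \<Rightarrow> bool" where
  "prewedge add zero smult \<longleftrightarrow>
     (\<forall>v w. add v w = add w v) \<and>
     (\<forall>u v w. add (add u v) w = add u (add v w)) \<and>
     (\<forall>v. add v zero = v) \<and>
     (\<forall>l e v. 0 \<le> l \<longrightarrow> 0 \<le> e \<longrightarrow> smult l (smult e v) = smult (l * e) v) \<and>
     (\<forall>v. smult 0 v = zero) \<and>
     (\<forall>v. smult 1 v = v) \<and>
     (\<forall>l e v. 0 \<le> l \<longrightarrow> 0 \<le> e \<longrightarrow> smult (l + e) v = add (smult l v) (smult e v)) \<and>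
     (\<forall>l v w. 0 \<le> l \<longrightarrow> smult l (add v w) = add (smult l v) (smult l w))"

definition wle :: "('a \<Rightarrow> 'a \<Rightarrow> 'a) \<Rightarrow> 'a \<Rightarrow> 'a \<Rightarrow> bool" where
  "wle add v w \<longleftrightarrow> (\<exists>z. add v z = w)"

definition is_sup :: "('a \<Rightarrow> 'a \<Rightarrow> 'a) \<Rightarrow> 'a set \<Rightarrow> 'a \<Rightarrow> bool" where
  "is_sup add S s \<longleftrightarrow> (\<forall>x\<in>S. wle add x s) \<and> (\<forall>u. (\<forall>x\<in>S. wle add x u) \<longrightarrow> wle add s u)"

definition is_inf :: "('a \<Rightarrow> 'a \<Rightarrow> 'a) \<Rightarrow> 'a set \<Rightarrow> 'a \<Rightarrow> bool" where
  "is_inf add S s \<longleftrightarrow> (\<forall>x\<in>S. wle add s x) \<and> (\<forall>u. (\<forall>x\<in>S. wle add u x) \<longrightarrow> wle add u s)"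

definition wedge :: "('a \<Rightarrow> 'a \<Rightarrow> 'a) \<Rightarrow> 'a \<Rightarrow> (real \<Rightarrow> 'a \<Rightarrow> 'a) \<Rightarrow> bool" where
  "wedge add zero smult \<longleftrightarrow> prewedge add zero smult \<and>
     (\<forall>v w. wle add v w \<longrightarrow> wle add w v \<longrightarrow> v = w) \<and>
     (\<forall>v. is_sup add {smult e v | e. 0 \<le> e \<and> e < 1} v)"

definition directed :: "('a \<Rightarrow> 'a \<Rightarrow> 'a) \<Rightarrow> 'a set \<Rightarrow> bool" where
  "directed add D \<longleftrightarrow> D \<noteq> {} \<and> (\<forall>x\<in>D. \<forall>y\<in>D. \<exists>z\<in>D. wle add x z \<and> wle add y z)"

definition cone :: "('a \<Rightarrow> 'a \<Rightarrow> 'a) \<Rightarrow> 'a \<Rightarrow> (real \<Rightarrow> 'a \<Rightarrow> 'a) \<Rightarrow> bool" where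
  "cone add zero smult \<longleftrightarrow> wedge add zero smult \<and>
     (\<forall>D. directed add D \<longrightarrow> (\<exists>s. is_sup add D s))"

text \<open>Infimum (unique in a wedge by antisymmetry).\<close>
definition winf :: "('a \<Rightarrow> 'a \<Rightarrow> 'a) \<Rightarrow> 'a set \<Rightarrow> 'a" where
  "winf add S = (THE s. is_inf add S s)"

definition cone_with_joins :: "('a \<Rightarrow> 'a \<Rightarrow> 'a) \<Rightarrow> 'a \<Rightarrow> (real \<Rightarrow> 'a \<Rightarrow> 'a) \<Rightarrow> bool" where
  "cone_with_joins add zero smult \<longleftrightarrow> cone add zero smult \<and>
     (\<forall>S. \<exists>s. is_inf add S s) \<and>
     (\<forall>v S. winf add (add v ` S) = add v (winf add S))"

definition wminus :: "('a \<Rightarrow> 'a \<Rightarrow> 'a) \<Rightarrow> 'a \<Rightarrow> 'a \<Rightarrow> 'a" where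
  "wminus add w v = (THE z. add v z = w \<and> (\<forall>z'. add v z' = w \<longrightarrow> wle add z' z))"

end

theory Submission
  imports Defs
begin

text \<open>Put d = w - v. From v + vt \<le> w + wt = v + (d + wt) we want to cancel v. Cancellation
  works for summands absorbing the infinitesimal part inf {\<eta> v | 0 < \<eta> \<le> 1} of v, and d absorbs
  it because v does and d is the greatest difference. Hence vt \<le> wt + (w - v) for every
  (v, w) \<in> A, and since addition distributes over infima, vt \<le> wt + x. The inequality
  v + x \<le> w is immediate from x \<le> w - v.\<close>

locale prewedge_space = comm_monoid add zero
  for add :: "'a \<Rightarrow> 'a \<Rightarrow> 'a" (infixl \<open>\<oplus>\<close> 65) and zero :: 'a +
  fixes smult :: "real \<Rightarrow> 'a \<Rightarrow> 'a" (infixr \<open>\<odot>\<close> 75)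
  assumes smult_smult: "0 \<le> l \<Longrightarrow> 0 \<le> e \<Longrightarrow> l \<odot> e \<odot> v = (l * e) \<odot> v"
    and smult_zero_left: "0 \<odot> v = zero"
    and smult_one_left: "1 \<odot> v = v"
    and smult_add_left: "0 \<le> l \<Longrightarrow> 0 \<le> e \<Longrightarrow> (l + e) \<odot> v = l \<odot> v \<oplus> e \<odot> v"
    and smult_add_right: "0 \<le> l \<Longrightarrow> l \<odot> (v \<oplus> w) = l \<odot> v \<oplus> l \<odot> w"
begin

abbreviation le :: "'a \<Rightarrow> 'a \<Rightarrow> bool" (infix \<open>\<preceq>\<close> 50)
  where "v \<preceq> w \<equiv> wle add v w"

lemma le_refl: "v \<preceq> v"
  unfolding wle_def using right_neutral by blast

lemma le_trans [trans]: "u \<preceq> v \<Longrightarrow> v \<preceq> w \<Longrightarrow> u \<preceq> w"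
  unfolding wle_def by (metis assoc)

lemma le_add_right: "v \<preceq> v \<oplus> z"
  unfolding wle_def by blast

lemma le_add_left: "v \<preceq> z \<oplus> v"
  using le_add_right commute by metis

lemma zero_le: "zero \<preceq> v"
  unfolding wle_def by auto

lemma add_left_mono: "a \<preceq> b \<Longrightarrow> c \<oplus> a \<preceq> c \<oplus> b"
  unfolding wle_def by (metis assoc)

lemma add_right_mono: "a \<preceq> b \<Longrightarrow> a \<oplus> c \<preceq> b \<oplus> c"
  using add_left_mono commute by metis

lemma smult_mono: "0 \<le> l \<Longrightarrow> a \<preceq> b \<Longrightarrow> l \<odot> a \<preceq> l \<odot> b"
  unfolding wle_def by (metis smult_add_right)

lemma smult_split: "0 \<le> l \<Longrightarrow> l \<le> 1 \<Longrightarrow> l \<odot> v \<oplus> (1 - l) \<odot> v = v"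
  using smult_add_left[of l "1 - l" v] smult_one_left by simp

lemma smult_le_self: "0 \<le> l \<Longrightarrow> l \<le> 1 \<Longrightarrow> l \<odot> v \<preceq> v"
  using smult_split unfolding wle_def by metis

lemma smult_inverse: "0 < l \<Longrightarrow> l \<odot> (1 / l) \<odot> v = v"
  using smult_smult[of l "1 / l" v] smult_one_left by simp

end

locale wedge_space = prewedge_space +
  assumes le_antisym: "v \<preceq> w \<Longrightarrow> w \<preceq> v \<Longrightarrow> v = w"
    and is_sup_smult: "is_sup add {e \<odot> v | e. 0 \<le> e \<and> e < 1} v"
begin

lemma add_eq_if_le: "u \<oplus> x \<preceq> u \<Longrightarrow> u \<oplus> x = u"
  using le_antisym le_add_right by blast

lemma le_if_smult_le: "(\<And>l. 0 \<le> l \<Longrightarrow> l < 1 \<Longrightarrow> l \<odot> v \<preceq> w) \<Longrightarrow> v \<preceq> w"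
  using is_sup_smult[of v] unfolding is_sup_def by blast

lemma idempotent_if_le_half: assumes "s \<preceq> (1/2) \<odot> s" shows "s \<oplus> s = s"
proof -
  have "2 \<odot> s \<preceq> 2 \<odot> (1/2) \<odot> s" using smult_mono[of 2] assms by simp
  moreover have "2 \<odot> s = s \<oplus> s" using smult_add_left[of 1 1 s] smult_one_left by simp
  ultimately show ?thesis using smult_inverse[of 2 s] add_eq_if_le by simp
qed

lemma absorbs_smult:
  assumes "u \<oplus> q = u" "0 \<le> c" shows "u \<oplus> c \<odot> q = u"
proof -
  have nat: "u \<oplus> real n \<odot> q = u" for n :: nat
  proof (induction n)
    case 0 show ?case using smult_zero_left by simp
  next
    case (Suc n)
    have "real (Suc n) \<odot> q = real n \<odot> q \<oplus> q"
      using smult_add_left[of "real n" 1 q] smult_one_left by (simp add: add.commute)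
    then show ?case using Suc assms(1) by (metis assoc)
  qed
  obtain n :: nat where n: "c \<le> real n" using real_arch_simple by blast
  have "real n \<odot> q = c \<odot> q \<oplus> (real n - c) \<odot> q"
    using smult_add_left[of c "real n - c" q] assms(2) n by simp
  then have "u \<oplus> c \<odot> q \<preceq> u \<oplus> real n \<odot> q" by (metis add_left_mono le_add_right)
  then show ?thesis using nat add_eq_if_le by simp
qed

lemma absorbs_smult_add:
  assumes "v \<oplus> e \<oplus> q = v \<oplus> e" "0 < \<eta>" "\<eta> \<le> 1"
  shows "\<eta> \<odot> v \<oplus> e \<oplus> q = \<eta> \<odot> v \<oplus> e"
proof -
  have "v \<oplus> e \<oplus> (1 / \<eta>) \<odot> q = v \<oplus> e" using absorbs_smult assms by simp
  then have "\<eta> \<odot> (v \<oplus> e \<oplus> (1 / \<eta>) \<odot> q) = \<eta> \<odot> (v \<oplus> e)" by simp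
  then have scaled: "\<eta> \<odot> v \<oplus> \<eta> \<odot> e \<oplus> q = \<eta> \<odot> v \<oplus> \<eta> \<odot> e"
    using smult_add_right smult_inverse assms(2) by simp
  have e: "\<eta> \<odot> e \<oplus> (1 - \<eta>) \<odot> e = e" using smult_split assms by simp
  have "\<eta> \<odot> v \<oplus> e \<oplus> q = \<eta> \<odot> v \<oplus> (\<eta> \<odot> e \<oplus> (1 - \<eta>) \<odot> e) \<oplus> q"
    by (simp only: e)
  also have "\<dots> = (\<eta> \<odot> v \<oplus> \<eta> \<odot> e \<oplus> q) \<oplus> (1 - \<eta>) \<odot> e"
    by (simp only: ac_simps)
  also have "\<dots> = \<eta> \<odot> v \<oplus> e" unfolding scaled by (simp only: assoc e)
  finally show ?thesis .
qed

end

locale cone_space = wedge_space +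
  assumes directed_has_sup: "directed add D \<Longrightarrow> \<exists>s. is_sup add D s"
begin

lemma directed_absorbed: "directed add {p. w \<oplus> p = w}"
  unfolding directed_def
proof (intro conjI ballI)
  show "{p. w \<oplus> p = w} \<noteq> {}" using right_neutral by blast
next
  fix x y assume "x \<in> {p. w \<oplus> p = w}" "y \<in> {p. w \<oplus> p = w}"
  then have "x \<oplus> y \<in> {p. w \<oplus> p = w}" by (simp add: assoc[symmetric])
  then show "\<exists>z\<in>{p. w \<oplus> p = w}. x \<preceq> z \<and> y \<preceq> z" using le_add_right le_add_left by blast
qed

text \<open>The supremum of the elements absorbed by w is idempotent, since it lies below half of
  itself; being also below w, it is absorbed by w.\<close>
lemma ex_greatest_absorbed: "\<exists>s. w \<oplus> s = w \<and> (\<forall>p. w \<oplus> p = w \<longrightarrow> p \<preceq> s)"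
proof -
  obtain s where s: "is_sup add {p. w \<oplus> p = w} s"
    using directed_has_sup[OF directed_absorbed] by blast
  have upper: "w \<oplus> p = w \<Longrightarrow> p \<preceq> s" for p using s unfolding is_sup_def by blast
  have least: "(\<And>p. w \<oplus> p = w \<Longrightarrow> p \<preceq> u) \<Longrightarrow> s \<preceq> u" for u
    using s unfolding is_sup_def by blast
  have "s \<preceq> w" by (rule least) (metis wle_def commute)
  then obtain y where y: "s \<oplus> y = w" unfolding wle_def by blast
  have "s \<preceq> (1/2) \<odot> s"
  proof (rule least)
    fix p assume "w \<oplus> p = w"
    then have "p \<oplus> p \<preceq> s" using upper by (metis assoc)
    then have "(1/2) \<odot> (p \<oplus> p) \<preceq> (1/2) \<odot> s" by (rule smult_mono[rotated]) simp
    moreover have "(1/2) \<odot> (p \<oplus> p) = p"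
      using smult_add_right[of "1/2" p p] smult_add_left[of "1/2" "1/2" p] smult_one_left by simp
    ultimately show "p \<preceq> (1/2) \<odot> s" by simp
  qed
  then have "s \<oplus> s = s" by (rule idempotent_if_le_half)
  then have "w \<oplus> s = w" using y by (metis assoc commute)
  then show ?thesis using upper by blast
qed

end

locale cone_with_joins_space = cone_space +
  assumes has_inf: "\<exists>s. is_inf add S s"
    and winf_add: "winf add ((\<oplus>) v ` S) = v \<oplus> winf add S"
begin

abbreviation minus :: "'a \<Rightarrow> 'a \<Rightarrow> 'a" (infixl \<open>\<ominus>\<close> 65)
  where "w \<ominus> v \<equiv> wminus add w v"

lemma is_inf_winf: "is_inf add S (winf add S)"
proof -
  obtain s where s: "is_inf add S s" using has_inf by blast
  moreover have "is_inf add S t \<Longrightarrow> t = s" for t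
    using s le_antisym unfolding is_inf_def by blast
  ultimately show ?thesis unfolding winf_def by (rule theI)
qed

lemma winf_lower: "x \<in> S \<Longrightarrow> winf add S \<preceq> x"
  using is_inf_winf unfolding is_inf_def by blast

lemma winf_greatest: "(\<And>x. x \<in> S \<Longrightarrow> u \<preceq> x) \<Longrightarrow> u \<preceq> winf add S"
  using is_inf_winf unfolding is_inf_def by blast

lemma winf_singleton: "winf add {c} = c"
  using winf_lower[of c "{c}"] winf_greatest[of "{c}" c] le_refl le_antisym by blast

lemma add_winf_pair: "v \<oplus> a = c \<Longrightarrow> v \<oplus> b = c \<Longrightarrow> v \<oplus> winf add {a, b} = c"
  using winf_add[of v "{a, b}"] winf_singleton by simp

text \<open>The greatest difference is z + s for any z with v + z = w and s the greatest element
  absorbed by w: another z' differs from inf {z, z'} by something absorbed by w.\<close>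
lemma ex_greatest_difference:
  assumes "v \<preceq> w" shows "\<exists>m. v \<oplus> m = w \<and> (\<forall>z. v \<oplus> z = w \<longrightarrow> z \<preceq> m)"
proof -
  obtain z0 where z0: "v \<oplus> z0 = w" using assms unfolding wle_def by blast
  obtain s where s: "w \<oplus> s = w" and s_greatest: "\<And>p. w \<oplus> p = w \<Longrightarrow> p \<preceq> s"
    using ex_greatest_absorbed by blast
  have "z \<preceq> z0 \<oplus> s" if z: "v \<oplus> z = w" for z
  proof -
    define b where "b = winf add {z, z0}"
    have vb: "v \<oplus> b = w" unfolding b_def using add_winf_pair z z0 by blast
    obtain q where q: "b \<oplus> q = z" using winf_lower[of z "{z, z0}"] unfolding b_def wle_def by blast
    have "w \<oplus> q = w" using vb q z by (metis assoc)
    then have "z \<preceq> b \<oplus> s" using q add_left_mono s_greatest by metis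
    moreover have "b \<oplus> s \<preceq> z0 \<oplus> s" unfolding b_def by (rule add_right_mono, rule winf_lower) simp
    ultimately show ?thesis by (rule le_trans)
  qed
  moreover have "v \<oplus> (z0 \<oplus> s) = w" using z0 s by (metis assoc)
  ultimately show ?thesis by blast
qed

lemma wminus_greatest:
  assumes "v \<preceq> w" shows "v \<oplus> (w \<ominus> v) = w \<and> (\<forall>z. v \<oplus> z = w \<longrightarrow> z \<preceq> w \<ominus> v)"
  unfolding wminus_def
  by (rule theI') (use ex_greatest_difference[OF assms] le_antisym in blast)

lemma add_wminus: "v \<preceq> w \<Longrightarrow> v \<oplus> (w \<ominus> v) = w"
  using wminus_greatest by blast

lemma le_wminus: "v \<preceq> w \<Longrightarrow> v \<oplus> z = w \<Longrightarrow> z \<preceq> w \<ominus> v"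
  using wminus_greatest by blast

definition infinitesimal :: "'a \<Rightarrow> 'a"
  where "infinitesimal v = winf add {\<eta> \<odot> v | \<eta>. 0 < \<eta> \<and> \<eta> \<le> 1}"

text \<open>For l < 1 pick 0 < e \<le> 1 with l (1 + e) \<le> 1; then l (v + inf_\<eta> \<eta> v) \<le> l (1 + e) v \<le> v,
  and the wedge axiom gives v + inf_\<eta> \<eta> v \<le> v.\<close>
lemma add_infinitesimal: "v \<oplus> infinitesimal v = v"
proof -
  let ?S = "{\<eta> \<odot> v | \<eta>. 0 < \<eta> \<and> \<eta> \<le> 1}"
  have "v \<oplus> infinitesimal v \<preceq> v"
  proof (rule le_if_smult_le)
    fix l :: real assume l: "0 \<le> l" "l < 1"
    define e where "e = min 1 ((1 - l) / l)"
    show "l \<odot> (v \<oplus> infinitesimal v) \<preceq> v"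
    proof (cases "l = 0")
      case True then show ?thesis using smult_zero_left zero_le by simp
    next
      case False
      then have e: "0 < e" "e \<le> 1" "l * (1 + e) \<le> 1"
        using l by (auto simp: e_def field_simps min_def)
      have "v \<oplus> infinitesimal v = winf add ((\<oplus>) v ` ?S)"
        unfolding infinitesimal_def by (rule winf_add[symmetric])
      also have "\<dots> \<preceq> v \<oplus> e \<odot> v" by (rule winf_lower) (use e in blast)
      also have "\<dots> = (1 + e) \<odot> v" using smult_add_left[of 1 e v] smult_one_left e by simp
      finally have "l \<odot> (v \<oplus> infinitesimal v) \<preceq> (l * (1 + e)) \<odot> v"
        using smult_mono smult_smult l e by (metis add_nonneg_nonneg less_imp_le zero_le_one)
      also have "\<dots> \<preceq> v" using smult_le_self l e by simp
      finally show ?thesis .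
    qed
  qed
  then show ?thesis by (rule add_eq_if_le)
qed

lemma wminus_add_infinitesimal: "v \<preceq> w \<Longrightarrow> (w \<ominus> v) \<oplus> infinitesimal v = w \<ominus> v"
  using le_wminus[of v w "(w \<ominus> v) \<oplus> infinitesimal v"] add_wminus add_infinitesimal add_eq_if_le
  by (metis assoc commute)

text \<open>The hypothesis survives replacing v by any \<eta> v with 0 < \<eta> \<le> 1, and taking the
  infimum over \<eta> then removes v.\<close>
lemma absorbs_if_absorbs_infinitesimal:
  assumes vq: "v \<oplus> e \<oplus> q = v \<oplus> e" and e: "e \<oplus> infinitesimal v = e"
  shows "e \<oplus> q = e"
proof -
  let ?S = "{\<eta> \<odot> v | \<eta>. 0 < \<eta> \<and> \<eta> \<le> 1}"
  have "(\<oplus>) (e \<oplus> q) ` ?S = (\<oplus>) e ` ?S"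
  proof (rule image_cong[OF refl])
    fix x assume "x \<in> ?S"
    then show "e \<oplus> q \<oplus> x = e \<oplus> x" using absorbs_smult_add[OF vq] by (auto simp: ac_simps)
  qed
  then have "(e \<oplus> q) \<oplus> infinitesimal v = e \<oplus> infinitesimal v"
    unfolding infinitesimal_def by (simp add: winf_add[symmetric])
  then show ?thesis using e by (metis assoc commute)
qed

lemma le_if_add_eq:
  assumes eq: "v \<oplus> a = v \<oplus> e" and e: "e \<oplus> infinitesimal v = e"
  shows "a \<preceq> e"
proof -
  define h where "h = winf add {a, e}"
  have vh: "v \<oplus> h = v \<oplus> e" unfolding h_def using add_winf_pair eq by blast
  obtain q where q: "h \<oplus> q = a" using winf_lower[of a "{a, e}"] unfolding h_def wle_def by blast
  obtain r where r: "h \<oplus> r = e" using winf_lower[of e "{a, e}"] unfolding h_def wle_def by blast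
  have "v \<oplus> h \<oplus> q = v \<oplus> h" using vh q eq by (metis assoc)
  then have "v \<oplus> e \<oplus> q = v \<oplus> e" using r by (metis assoc commute)
  then have "e \<oplus> q = e" using e by (rule absorbs_if_absorbs_infinitesimal)
  then show ?thesis using q r add_right_mono le_add_right by metis
qed

lemma le_add_wminus:
  assumes "v \<preceq> w" "v \<oplus> vt \<preceq> w \<oplus> wt" shows "vt \<preceq> wt \<oplus> (w \<ominus> v)"
proof -
  obtain k where k: "v \<oplus> vt \<oplus> k = w \<oplus> wt" using assms(2) unfolding wle_def by blast
  have "v \<oplus> (vt \<oplus> k) = v \<oplus> ((w \<ominus> v) \<oplus> wt)" using k add_wminus[OF assms(1)] by (metis assoc)
  moreover have "(w \<ominus> v) \<oplus> wt \<oplus> infinitesimal v = (w \<ominus> v) \<oplus> wt"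
    using wminus_add_infinitesimal[OF assms(1)] by (metis assoc commute)
  ultimately have "vt \<oplus> k \<preceq> (w \<ominus> v) \<oplus> wt" by (rule le_if_add_eq)
  then show ?thesis using le_add_right le_trans commute by metis
qed

end

lemma cone_with_joins_space_if_cone_with_joins:
  "cone_with_joins add zero smult \<Longrightarrow> cone_with_joins_space add zero smult"
  unfolding cone_with_joins_def cone_def wedge_def prewedge_def
  by unfold_locales auto

theorem mainTheorem12:
  fixes add :: "'a \<Rightarrow> 'a \<Rightarrow> 'a" and zero :: 'a and smult :: "real \<Rightarrow> 'a \<Rightarrow> 'a"
    and A At :: "('a \<times> 'a) set"
  assumes J: "cone_with_joins add zero smult"
    and le: "\<forall>(v, w)\<in>A. wle add v w"
    and cross: "\<forall>(v, w)\<in>A. \<forall>(vt, wt)\<in>At. wle add (add v vt) (add w wt)"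
  shows "\<forall>(v, w)\<in>A. \<forall>(vt, wt)\<in>At.
           wle add (add v (winf add ((\<lambda>(v, w). wminus add w v) ` A))) w \<and>
           wle add vt (add wt (winf add ((\<lambda>(v, w). wminus add w v) ` A)))"
proof (intro ballI, clarify)
  interpret cone_with_joins_space add zero smult
    using J by (rule cone_with_joins_space_if_cone_with_joins)
  let ?D = "(\<lambda>(v, w). wminus add w v) ` A"
  fix v w vt wt assume vw: "(v, w) \<in> A" and t: "(vt, wt) \<in> At"
  have "wle add (add v (winf add ?D)) (add v (wminus add w v))"
    by (rule add_left_mono, rule winf_lower) (use vw in force)
  then have "wle add (add v (winf add ?D)) w" using add_wminus le vw by auto
  moreover have "wle add vt (winf add (add wt ` ?D))"
    by (rule winf_greatest) (use le_add_wminus le cross t in fastforce)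
  then have "wle add vt (add wt (winf add ?D))" by (simp add: winf_add)
  ultimately show "wle add (add v (winf add ?D)) w \<and> wle add vt (add wt (winf add ?D))"
    by blast
qed

end
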